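(* Fix parameters $T>0$, $T_f>0$, $f_e>0$, $c_0>0$, $W>0$, a probability density $f$ on $(0,\infty)$, and a number $D_e\ge 0$ with $T-\frac{c_0D_e}{f_e}>0$. Define $$N(D_e)=\left\lceil \frac{Tf_e-c_0D_e}{T_f f_e}\right\rceil,\qquad t_1(D_e)=\Big(T-\frac{c_0D_e}{f_e}\Big)-\Big\lceil \Big(T-\frac{c_0D_e}{f_e}\Big)/T_f\Big\rceil T_f+T_f ,$$ and for $d\ge 0$, $h>0$, $t>0$ let $e(d,h,t,W)=\frac{t\,(e^{d/(tW)}-1)}{h}$. Define recursively, for $d\ge 0$ and $h>0$, $$J_1(d,h)=e(d,h,t_1(D_e),W),\qquad J_n(d)=\int_0^\infty J_n(d,h)f(h)\,dh\ (n\ge 1),$$ $$J_n(d,h)=\min_{0\le x\le d}\Big(e(x,h,T_f,W)+J_{n-1}(d-x)\Big)\quad (n\ge 2).$$ Then for every $n\in\{1,2,\dots,N(D_e)-1\}$, the function $d\mapsto J_n(d)$ is convex on $[0,D_e]$, and for every $h>0$ the function $d\mapsto J_n(d,h)$ is convex on $[0,D_e]$.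
   Context: Model: a mobile device offloads $D_e$ data nats to a base station over block-fading blocks of duration $T_f$, indexed backwards so that offloading starts in block $N(D_e)$ and ends in block $1$; the base station needs time $c_0D_e/f_e$ to compute, so transmission must finish within $T-c_0D_e/f_e$; block $1$ has transmission time $t_1(D_e)\in(0,T_f]$ and all other blocks have transmission time $T_f$. The normalized channel gain $h$ is i.i.d. across blocks with density $f$. $e(d,h,t,W)$ is the energy to send $d$ nats in time $t$ over bandwidth $W$ with normalized gain $h$ (Shannon capacity). $J_n(d)$ is the minimal expected energy to send $d$ nats over blocks $n,\dots,1$ and $J_n(d,h)$ the same conditioned on the gain $h$ in block $n$. The functions $J_n$ take values in $[0,+\infty]$ (the minimum is understood as an infimum), and convexity is meant in the usual sense for extended-real-valued functions. *)

theory Defs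
  imports "HOL-Analysis.Analysis"
begin

definition energy :: "real \<Rightarrow> real \<Rightarrow> real \<Rightarrow> real \<Rightarrow> real" where
  "energy d h t W = t * (exp (d / (t * W)) - 1) / h"

definition Nblocks :: "real \<Rightarrow> real \<Rightarrow> real \<Rightarrow> real \<Rightarrow> real \<Rightarrow> int" where
  "Nblocks T Tf fe c0 De = \<lceil>(T * fe - c0 * De) / (Tf * fe)\<rceil>"

definition t1 :: "real \<Rightarrow> real \<Rightarrow> real \<Rightarrow> real \<Rightarrow> real \<Rightarrow> real" where
  "t1 T Tf fe c0 De =
     (T - c0 * De / fe) - real_of_int \<lceil>(T - c0 * De / fe) / Tf\<rceil> * Tf + Tf"

text \<open>Jc Tf W t1 f n d h = J_n(d,h) (for n \<ge> 1; index 0 unused), values in [0,\<infinity>].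
  The minimum is understood as an infimum.\<close>
fun Jc :: "real \<Rightarrow> real \<Rightarrow> real \<Rightarrow> (real \<Rightarrow> real) \<Rightarrow> nat \<Rightarrow> real \<Rightarrow> real \<Rightarrow> ennreal" where
  "Jc Tf W t f 0 d h = 0"
| "Jc Tf W t f (Suc 0) d h = ennreal (energy d h t W)"
| "Jc Tf W t f (Suc (Suc n)) d h =
     (INF x\<in>{0..d}. ennreal (energy x h Tf W)
        + (\<integral>\<^sup>+ g\<in>{0<..}. Jc Tf W t f (Suc n) (d - x) g * ennreal (f g) \<partial>lborel))"

definition Jexp :: "real \<Rightarrow> real \<Rightarrow> real \<Rightarrow> (real \<Rightarrow> real) \<Rightarrow> nat \<Rightarrow> real \<Rightarrow> ennreal" where
  "Jexp Tf W t f n d = (\<integral>\<^sup>+ g\<in>{0<..}. Jc Tf W t f n d g * ennreal (f g) \<partial>lborel)"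

definition convex_on_ennreal :: "real set \<Rightarrow> (real \<Rightarrow> ennreal) \<Rightarrow> bool" where
  "convex_on_ennreal S g \<longleftrightarrow> convex S \<and>
     (\<forall>x\<in>S. \<forall>y\<in>S. \<forall>u::real. 0 < u \<and> u < 1 \<longrightarrow>
        g (u * x + (1 - u) * y) \<le> ennreal u * g x + ennreal (1 - u) * g y)"

end

theory Submission
  imports Defs
begin

text \<open>
  The energy is convex in the data amount, because \<open>exp\<close> is. Convexity then propagates
  backwards through the recursion: averaging a family of convex functions over the channel gain
  keeps them convex, and \<open>J\<^sub>n(\<cdot>, h)\<close> is the infimal convolution of the convex energy of block
  \<open>n\<close> with the convex \<open>J\<^sub>n\<^sub>-\<^sub>1\<close>, which is again convex. Measurability of the integrands
  comes for free since \<open>J\<^sub>n(d, h)\<close> is antitone in \<open>h\<close>.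
\<close>

lemma energy_nonneg:
  assumes "0 \<le> d" "0 < t" "0 < W" "0 < h"
  shows "0 \<le> energy d h t W"
  using assms by (simp add: energy_def)

lemma energy_antimono_gain:
  assumes "0 \<le> d" "0 < t" "0 < W" "0 < h1" "h1 \<le> h2"
  shows "energy d h2 t W \<le> energy d h1 t W"
proof -
  have "0 \<le> t * (exp (d / (t * W)) - 1)" using assms by simp
  then show ?thesis
    unfolding energy_def using assms by (simp add: divide_left_mono)
qed

lemma energy_convex:
  assumes "0 < t" "0 < W" "0 < h" "0 \<le> u" "u \<le> 1"
  shows "energy (u * x + (1 - u) * y) h t W \<le> u * energy x h t W + (1 - u) * energy y h t W"
proof -
  have e: "energy d h t W = t / h * exp (d / (t * W)) - t / h" for d
    by (simp add: energy_def diff_divide_distrib right_diff_distrib)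
  have "exp (u * x / (t * W) + (1 - u) * y / (t * W))
      \<le> u * exp (x / (t * W)) + (1 - u) * exp (y / (t * W))"
    using convex_onD[OF exp_convex, of "1 - u" "x / (t * W)" "y / (t * W)"] assms by simp
  from mult_left_mono[OF this, of "t / h"]
  have "energy (u * x + (1 - u) * y) h t W
      \<le> t / h * (u * exp (x / (t * W)) + (1 - u) * exp (y / (t * W))) - t / h"
    unfolding e using assms by (simp add: add_divide_distrib)
  also have "\<dots> = u * energy x h t W + (1 - u) * energy y h t W"
    unfolding e using assms by (simp add: field_simps)
  finally show ?thesis .
qed

lemma convex_on_ennreal_energy:
  assumes "0 < t" "0 < W" "0 < h"
  shows "convex_on_ennreal {0..D} (\<lambda>d. ennreal (energy d h t W))"
  unfolding convex_on_ennreal_def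
proof (intro conjI ballI allI impI)
  fix x y u :: real assume xy: "x \<in> {0..D}" "y \<in> {0..D}" and u: "0 < u \<and> u < 1"
  have "ennreal (energy (u * x + (1 - u) * y) h t W)
      \<le> ennreal (u * energy x h t W + (1 - u) * energy y h t W)"
    using energy_convex[OF assms, of u] u by (intro ennreal_leI) simp
  then show "ennreal (energy (u * x + (1 - u) * y) h t W)
      \<le> ennreal u * ennreal (energy x h t W) + ennreal (1 - u) * ennreal (energy y h t W)"
    using xy u assms energy_nonneg[of x t W h] energy_nonneg[of y t W h]
    by (simp add: ennreal_plus ennreal_mult)
qed simp

lemma convex_on_ennreal_nn_integral:
  assumes "convex S"
    and meas: "\<And>d. d \<in> S \<Longrightarrow> F d \<in> borel_measurable M"
    and cvx: "\<And>g. convex_on_ennreal S (\<lambda>d. F d g)"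
  shows "convex_on_ennreal S (\<lambda>d. \<integral>\<^sup>+ g. F d g \<partial>M)"
  unfolding convex_on_ennreal_def
proof (intro conjI ballI allI impI \<open>convex S\<close>)
  fix x y u :: real assume x: "x \<in> S" and y: "y \<in> S" and u: "0 < u \<and> u < 1"
  have "(\<integral>\<^sup>+ g. F (u * x + (1 - u) * y) g \<partial>M)
      \<le> (\<integral>\<^sup>+ g. ennreal u * F x g + ennreal (1 - u) * F y g \<partial>M)"
    using cvx x y u unfolding convex_on_ennreal_def by (intro nn_integral_mono) blast
  also have "\<dots> = ennreal u * (\<integral>\<^sup>+ g. F x g \<partial>M) + ennreal (1 - u) * (\<integral>\<^sup>+ g. F y g \<partial>M)"
    using meas[OF x] meas[OF y] by (simp add: nn_integral_add nn_integral_cmult)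
  finally show "(\<integral>\<^sup>+ g. F (u * x + (1 - u) * y) g \<partial>M)
      \<le> ennreal u * (\<integral>\<^sup>+ g. F x g \<partial>M) + ennreal (1 - u) * (\<integral>\<^sup>+ g. F y g \<partial>M)" .
qed

lemma convex_on_ennreal_mult_const:
  assumes "convex_on_ennreal S F"
  shows "convex_on_ennreal S (\<lambda>d. F d * c)"
  using assms unfolding convex_on_ennreal_def
  by (metis (no_types, lifting) distrib_right mult.assoc mult_right_mono zero_le)

lemma ennreal_le_convex_comb_INF:
  fixes F G :: "'a \<Rightarrow> ennreal"
  assumes u: "0 < u" "u < 1"
    and le: "\<And>a b. a \<in> A \<Longrightarrow> b \<in> B \<Longrightarrow> c \<le> ennreal u * F a + ennreal (1 - u) * G b"
  shows "c \<le> ennreal u * (INF a\<in>A. F a) + ennreal (1 - u) * (INF b\<in>B. G b)"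
proof (rule ennreal_le_epsilon)
  fix e :: real
  assume finite: "ennreal u * (INF a\<in>A. F a) + ennreal (1 - u) * (INF b\<in>B. G b) < top"
    and e: "0 < e"
  then have "(INF a\<in>A. F a) < top" "(INF b\<in>B. G b) < top"
    using u by (auto simp: ennreal_mult_less_top)
  then obtain a b where a: "a \<in> A" "F a < (INF a\<in>A. F a) + e"
    and b: "b \<in> B" "G b < (INF b\<in>B. G b) + e"
    using INF_approx_ennreal[OF e refl] unfolding infinity_ennreal_def by (metis less_irrefl)
  have "c \<le> ennreal u * F a + ennreal (1 - u) * G b"
    using le a b by blast
  also have "\<dots> \<le> ennreal u * ((INF a\<in>A. F a) + e) + ennreal (1 - u) * ((INF b\<in>B. G b) + e)"
    using a b by (intro add_mono mult_left_mono) auto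
  also have "\<dots> = ennreal u * (INF a\<in>A. F a) + ennreal (1 - u) * (INF b\<in>B. G b)
      + (ennreal u + ennreal (1 - u)) * ennreal e"
    by (simp add: distrib_left distrib_right add_ac)
  also have "ennreal u + ennreal (1 - u) = 1"
    using u by (simp flip: ennreal_plus)
  finally show "c \<le> ennreal u * (INF a\<in>A. F a) + ennreal (1 - u) * (INF b\<in>B. G b) + ennreal e"
    by simp
qed

lemma convex_on_ennreal_inf_convolution:
  assumes E: "convex_on_ennreal {0..D} E" and B: "convex_on_ennreal {0..D} B"
  shows "convex_on_ennreal {0..D} (\<lambda>d. INF w\<in>{0..d}. E w + B (d - w))"
  unfolding convex_on_ennreal_def
proof (intro conjI ballI allI impI)
  fix x y u :: real assume x: "x \<in> {0..D}" and y: "y \<in> {0..D}" and u: "0 < u \<and> u < 1"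
  define z where "z = u * x + (1 - u) * y"
  show "(INF w\<in>{0..z}. E w + B (z - w))
      \<le> ennreal u * (INF w\<in>{0..x}. E w + B (x - w)) + ennreal (1 - u) * (INF w\<in>{0..y}. E w + B (y - w))"
  proof (rule ennreal_le_convex_comb_INF)
    fix w1 w2 assume w1: "w1 \<in> {0..x}" and w2: "w2 \<in> {0..y}"
    define w where "w = u * w1 + (1 - u) * w2"
    have "w \<in> {0..z}"
      using w1 w2 u unfolding w_def z_def by (auto intro!: add_mono mult_left_mono)
    then have "(INF w\<in>{0..z}. E w + B (z - w)) \<le> E w + B (z - w)" by (rule INF_lower)
    also have "\<dots> \<le> (ennreal u * E w1 + ennreal (1 - u) * E w2)
        + (ennreal u * B (x - w1) + ennreal (1 - u) * B (y - w2))"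
    proof (rule add_mono)
      show "E w \<le> ennreal u * E w1 + ennreal (1 - u) * E w2"
        using E w1 w2 x y u unfolding convex_on_ennreal_def w_def by auto
      have "z - w = u * (x - w1) + (1 - u) * (y - w2)"
        unfolding z_def w_def by (simp add: algebra_simps)
      moreover have "x - w1 \<in> {0..D}" "y - w2 \<in> {0..D}" using x y w1 w2 by auto
      ultimately show "B (z - w) \<le> ennreal u * B (x - w1) + ennreal (1 - u) * B (y - w2)"
        using B u unfolding convex_on_ennreal_def by metis
    qed
    also have "\<dots> = ennreal u * (E w1 + B (x - w1)) + ennreal (1 - u) * (E w2 + B (y - w2))"
      by (simp add: distrib_left algebra_simps)
    finally show "(INF w\<in>{0..z}. E w + B (z - w))
        \<le> ennreal u * (E w1 + B (x - w1)) + ennreal (1 - u) * (E w2 + B (y - w2))" .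
  qed (use u in auto)
qed simp

lemma borel_measurable_antimono:
  fixes G :: "real \<Rightarrow> 'a::{linorder_topology, second_countable_topology}"
  assumes "antimono G"
  shows "G \<in> borel_measurable borel"
proof (rule borel_measurableI_greater)
  fix a
  have "is_interval {x. a < G x}"
    unfolding is_interval_1 using assms by (auto dest: antimonoD intro: order_less_le_trans)
  then show "{x \<in> space borel. a < G x} \<in> sets borel"
    using real_interval_borel_measurable by simp
qed

lemma Jc_antimono_gain:
  assumes "0 \<le> d" "0 < h1" "h1 \<le> h2" "0 < t" "0 < Tf" "0 < W"
  shows "Jc Tf W t f n d h2 \<le> Jc Tf W t f n d h1"
proof -
  consider "n = 0" | "n = Suc 0" | m where "n = Suc (Suc m)"
    by (metis not0_implies_Suc)
  then show ?thesis
  proof cases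
    case 2
    then show ?thesis using assms energy_antimono_gain[of d t W h1 h2] by (simp add: ennreal_leI)
  next
    case 3
    show ?thesis unfolding 3 Jc.simps
    proof (rule INF_mono)
      fix w assume "w \<in> {0..d}"
      then show "\<exists>v\<in>{0..d}. ennreal (energy v h2 Tf W)
            + (\<integral>\<^sup>+ g\<in>{0<..}. Jc Tf W t f (Suc m) (d - v) g * ennreal (f g) \<partial>lborel)
          \<le> ennreal (energy w h1 Tf W)
            + (\<integral>\<^sup>+ g\<in>{0<..}. Jc Tf W t f (Suc m) (d - w) g * ennreal (f g) \<partial>lborel)"
        using assms energy_antimono_gain[of w Tf W h1 h2]
        by (intro bexI[of _ w] add_mono ennreal_leI) auto
    qed
  qed simp
qed

lemma Jc_integrand_measurable:
  assumes "0 \<le> d" "0 < t" "0 < Tf" "0 < W" "f \<in> borel_measurable lborel"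
  shows "(\<lambda>g. Jc Tf W t f n d g * ennreal (f g) * indicator {0<..} g) \<in> borel_measurable lborel"
proof -
  \<comment> \<open>Extending by \<open>\<top>\<close> to \<open>h \<le> 0\<close> keeps \<open>J\<^sub>n(d, \<cdot>)\<close> antitone on all of \<open>\<real>\<close>.\<close>
  define G where "G g = (if 0 < g then Jc Tf W t f n d g else top)" for g
  have "antimono G"
    unfolding G_def using Jc_antimono_gain[OF assms(1) _ _ assms(2-4)] by (auto intro!: antimonoI)
  then have "G \<in> borel_measurable lborel"
    using borel_measurable_antimono by simp
  moreover have "Jc Tf W t f n d g * ennreal (f g) * indicator {0<..} g
      = G g * ennreal (f g) * indicator {0<..} g" for g
    by (simp add: G_def indicator_def)
  ultimately show ?thesis using assms(5) by simp
qed

lemma convex_on_ennreal_Jexp: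
  assumes "0 < t" "0 < Tf" "0 < W" "f \<in> borel_measurable lborel"
    and cvx: "\<And>h. 0 < h \<Longrightarrow> convex_on_ennreal {0..D} (\<lambda>d. Jc Tf W t f n d h)"
  shows "convex_on_ennreal {0..D} (Jexp Tf W t f n)"
  unfolding Jexp_def
proof (rule convex_on_ennreal_nn_integral)
  fix g :: real
  show "convex_on_ennreal {0..D} (\<lambda>d. Jc Tf W t f n d g * ennreal (f g) * indicator {0<..} g)"
  proof (cases "0 < g")
    case True
    then show ?thesis using convex_on_ennreal_mult_const[OF cvx[OF True]] by simp
  qed (simp add: convex_on_ennreal_def)
qed (use assms Jc_integrand_measurable in auto)

lemma convex_on_ennreal_Jc:
  assumes "0 < t" "0 < Tf" "0 < W" "f \<in> borel_measurable lborel" "0 < h"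
  shows "convex_on_ennreal {0..D} (\<lambda>d. Jc Tf W t f (Suc m) d h)"
  using \<open>0 < h\<close>
proof (induction m arbitrary: h)
  case 0
  then show ?case using convex_on_ennreal_energy assms by simp
next
  case (Suc m)
  have "Jc Tf W t f (Suc (Suc m)) d h
      = (INF w\<in>{0..d}. ennreal (energy w h Tf W) + Jexp Tf W t f (Suc m) (d - w))" for d
    by (simp add: Jexp_def)
  moreover have "convex_on_ennreal {0..D} (Jexp Tf W t f (Suc m))"
    using Suc.IH assms by (intro convex_on_ennreal_Jexp) auto
  ultimately show ?case
    using Suc.prems assms by (simp add: convex_on_ennreal_inf_convolution[OF convex_on_ennreal_energy])
qed

lemma t1_pos:
  assumes "0 < Tf" "0 < T - c0 * De / fe"
  shows "0 < t1 T Tf fe c0 De"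
proof -
  define s where "s = T - c0 * De / fe"
  have "real_of_int \<lceil>s / Tf\<rceil> * Tf < (s / Tf + 1) * Tf"
    using assms by (intro mult_strict_right_mono) linarith+
  also have "\<dots> = s + Tf" using assms by (simp add: field_simps)
  finally show ?thesis unfolding t1_def s_def[symmetric] by simp
qed

text \<open>
  Only \<open>t\<^sub>1(D\<^sub>e) > 0\<close> and measurability of \<open>f\<close> are used: convexity holds for every \<open>n \<ge> 1\<close>.
\<close>

theorem lemma1:
  fixes T Tf fe c0 W De :: real and f :: "real \<Rightarrow> real"
  assumes "T > 0" "Tf > 0" "fe > 0" "c0 > 0" "W > 0"
    and f_meas: "f \<in> borel_measurable lborel"
    and f_nonneg: "\<And>h. h > 0 \<Longrightarrow> f h \<ge> 0"
    and f_prob: "(\<integral>\<^sup>+ h\<in>{0<..}. ennreal (f h) \<partial>lborel) = 1"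
    and "De \<ge> 0" and "T - c0 * De / fe > 0"
    and n: "1 \<le> n" "int n \<le> Nblocks T Tf fe c0 De - 1"
  shows "convex_on_ennreal {0..De} (Jexp Tf W (t1 T Tf fe c0 De) f n)
       \<and> (\<forall>h>0. convex_on_ennreal {0..De} (\<lambda>d. Jc Tf W (t1 T Tf fe c0 De) f n d h))"
proof -
  obtain m where m: "n = Suc m" using n(1) by (cases n) auto
  have t1: "0 < t1 T Tf fe c0 De" using t1_pos assms by blast
  have Jc: "\<forall>h>0. convex_on_ennreal {0..De} (\<lambda>d. Jc Tf W (t1 T Tf fe c0 De) f n d h)"
    unfolding m using convex_on_ennreal_Jc[OF t1] assms by blast
  then have "convex_on_ennreal {0..De} (Jexp Tf W (t1 T Tf fe c0 De) f n)"
    using assms t1 by (intro convex_on_ennreal_Jexp) auto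
  with Jc show ?thesis by blast
qed

end
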